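(* Let $(\Omega,\mathcal E_\Omega)$ be a finite-dimensional generalized probabilistic theory whose state space $\Omega$ is transitive and whose positive cone $V_+$ is self-dual with respect to $\langle\cdot,\cdot\rangle_{GL(\Omega)}$. Let $F=\{f_a\}_{a\in A}$ and $G=\{g_b\}_{b\in B}$ be ideal observables on $\Omega$ with finite outcome sets $A,B$, and let $\widetilde M^{FG}=\{\widetilde m^{FG}_{ab}\}_{(a,b)\in A\times B}$ be an arbitrary observable on $A\times B$ with marginals $\widetilde M^F=\{\sum_b\widetilde m^{FG}_{ab}\}_a$, $\widetilde M^G=\{\sum_a\widetilde m^{FG}_{ab}\}_b$. Then there exists a state $\omega\in\Omega$ such that $$D_\infty(\widetilde M^F,F)+D_\infty(\widetilde M^G,G)\ge LE(\omega^F)+LE(\omega^G).$$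
   Context: Setting: $V=\mathbb R^{N+1}$ with Euclidean inner product $(\cdot,\cdot)_E$. A state space $\Omega\subset V$ is a compact convex set with $\mathrm{span}(\Omega)=V$ and $0\notin\mathrm{aff}(\Omega)$; $V_+=\{\lambda\omega:\lambda\ge0,\omega\in\Omega\}$; the unit effect $u\in V^*$ satisfies $u(\omega)=1$ on $\Omega$; effects are $\mathcal E_\Omega=\{e\in V^*:0\le e(\omega)\le1\ \forall\omega\in\Omega\}$. An observable with finite outcome set $X$ is a family of effects $\{e_x\}_{x\in X}$ with $\sum_xe_x=u$ (the trivial observable $\{u\}$ is excluded). An effect is pure if it is an extreme point of $\mathcal E_\Omega$; indecomposable if $e\ne0$ and $e=e_1+e_2$ with $e_1,e_2\in\mathcal E_\Omega$ forces $e_1,e_2$ to be scalar multiples of $e$. $F=\{f_a\}$ is ideal if each $f_a$ equals $\sum_{i\in I_a}e_i$ or $u-\sum_{i\in I_a}e_i$ for a finite family of pure indecomposable effects. $GL(\Omega)$: group of linear bijections $T$ of $V$ with $T(\Omega)=\Omega$, $\mu$ its normalized Haar measure, $\langle x,y\rangle_{GL(\Omega)}=\int(Tx,Ty)_E\,d\mu(T)$. $\Omega$ is transitive if $GL(\Omega)$ acts transitively on the extreme points of $\Omega$; $V_+$ is self-dual w.r.t. $\langle\cdot,\cdot\rangle_{GL(\Omega)}$ if $V_+=\{y:\langle x,y\rangle_{GL(\Omega)}\ge0\ \forall x\in V_+\}$. $\omega^F=\{f_a(\omega)\}_a$. Minimum localization error: $LE(\omega^F)=1-\max_{a\in A}f_a(\omega)$.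 $l_\infty$ distance: $D_\infty(\widetilde F,F)=\sup_{\omega\in\Omega}\max_{a\in A}|\widetilde f_a(\omega)-f_a(\omega)|$. *)

theory Defs
  imports "HOL-Analysis.Analysis"
begin

text \<open>V = real^'n (a finite index type of cardinality N+1). Dual vectors (elements of V^*)
  are identified with vectors via the Euclidean inner product: e(w) = e \<bullet> w.\<close>

definition state_space :: "(real^'n) set \<Rightarrow> bool" where
  "state_space \<Omega> \<longleftrightarrow> compact \<Omega> \<and> convex \<Omega> \<and> span \<Omega> = UNIV \<and> (0::real^'n) \<notin> affine hull \<Omega>"

definition pos_cone :: "(real^'n) set \<Rightarrow> (real^'n) set" where
  "pos_cone \<Omega> = {x. \<exists>c\<ge>0. \<exists>w\<in>\<Omega>. x = c *\<^sub>R w}"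

definition unit_effect :: "(real^'n) set \<Rightarrow> real^'n \<Rightarrow> bool" where
  "unit_effect \<Omega> u \<longleftrightarrow> (\<forall>w\<in>\<Omega>. u \<bullet> w = 1)"

definition effects :: "(real^'n) set \<Rightarrow> (real^'n) set" where
  "effects \<Omega> = {e. \<forall>w\<in>\<Omega>. 0 \<le> e \<bullet> w \<and> e \<bullet> w \<le> 1}"

text \<open>An observable with finite outcome set X (the trivial observable {u}, i.e. a single
  outcome, is excluded).\<close>
definition observable :: "(real^'n) set \<Rightarrow> real^'n \<Rightarrow> 'x set \<Rightarrow> ('x \<Rightarrow> real^'n) \<Rightarrow> bool" where
  "observable \<Omega> u X e \<longleftrightarrow> finite X \<and> card X \<noteq> 1 \<and> (\<forall>x\<in>X. e x \<in> effects \<Omega>) \<and> (\<Sum>x\<in>X. e x) = u"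

definition pure_effect :: "(real^'n) set \<Rightarrow> real^'n \<Rightarrow> bool" where
  "pure_effect \<Omega> e \<longleftrightarrow> e extreme_point_of (effects \<Omega>)"

definition indecomposable :: "(real^'n) set \<Rightarrow> real^'n \<Rightarrow> bool" where
  "indecomposable \<Omega> e \<longleftrightarrow> e \<noteq> 0 \<and>
     (\<forall>e1\<in>effects \<Omega>. \<forall>e2\<in>effects \<Omega>. e = e1 + e2 \<longrightarrow>
        (\<exists>c. e1 = c *\<^sub>R e) \<and> (\<exists>c. e2 = c *\<^sub>R e))"

definition ideal_observable :: "(real^'n) set \<Rightarrow> real^'n \<Rightarrow> 'x set \<Rightarrow> ('x \<Rightarrow> real^'n) \<Rightarrow> bool" where
  "ideal_observable \<Omega> u X f \<longleftrightarrow> observable \<Omega> u X f \<and>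
     (\<forall>a\<in>X. \<exists>es::(real^'n) list.
        (\<forall>e\<in>set es. e \<in> effects \<Omega> \<and> pure_effect \<Omega> e \<and> indecomposable \<Omega> e) \<and>
        (f a = sum_list es \<or> f a = u - sum_list es))"

definition GL :: "(real^'n) set \<Rightarrow> (real^'n^'n) set" where
  "GL \<Omega> = {T. invertible T \<and> (\<lambda>x. T *v x) ` \<Omega> = \<Omega>}"

text \<open>M is the normalized Haar measure of the compact group GL(\<Omega>): a Borel probability
  measure on matrices concentrated on GL(\<Omega>) and invariant under left translation.
  (By existence and uniqueness of Haar measure this characterizes it.)\<close>
definition haar_GL :: "(real^'n) set \<Rightarrow> (real^'n^'n) measure \<Rightarrow> bool" where
  "haar_GL \<Omega> M \<longleftrightarrow> sets M = sets borel \<and> emeasure M (space M) = 1 \<and> emeasure M (GL \<Omega>) = 1 \<and>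
     (\<forall>T\<in>GL \<Omega>. distr M borel (\<lambda>S. T ** S) = M)"

definition GL_inner :: "(real^'n^'n) measure \<Rightarrow> real^'n \<Rightarrow> real^'n \<Rightarrow> real" where
  "GL_inner M x y = (\<integral>T. (T *v x) \<bullet> (T *v y) \<partial>M)"

definition transitive_ss :: "(real^'n) set \<Rightarrow> bool" where
  "transitive_ss \<Omega> \<longleftrightarrow> (\<forall>w1 w2. w1 extreme_point_of \<Omega> \<longrightarrow> w2 extreme_point_of \<Omega> \<longrightarrow>
      (\<exists>T\<in>GL \<Omega>. T *v w1 = w2))"

definition self_dual_wrt :: "(real^'n) set \<Rightarrow> (real^'n \<Rightarrow> real^'n \<Rightarrow> real) \<Rightarrow> bool" where
  "self_dual_wrt \<Omega> ip \<longleftrightarrow> pos_cone \<Omega> = {y. \<forall>x\<in>pos_cone \<Omega>. ip x y \<ge> 0}"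

definition LE :: "'x set \<Rightarrow> ('x \<Rightarrow> real^'n) \<Rightarrow> real^'n \<Rightarrow> real" where
  "LE X f w = 1 - Max ((\<lambda>a. f a \<bullet> w) ` X)"

definition D_inf :: "(real^'n) set \<Rightarrow> 'x set \<Rightarrow> ('x \<Rightarrow> real^'n) \<Rightarrow> ('x \<Rightarrow> real^'n) \<Rightarrow> real" where
  "D_inf \<Omega> X ft f = (SUP w\<in>\<Omega>. Max ((\<lambda>a. \<bar>ft a \<bullet> w - f a \<bullet> w\<bar>) ` X))"

end

theory Submission
  imports Defs "HOL-Probability.Probability"
begin

(* Averaging the Euclidean inner product over the Haar measure gives an inner product GL_inner
   that is invariant under GL(Omega); only left invariance of the measure is assumed, but a
   compact group is unimodular.  Self-duality represents every effect e by a cone vector riesz e,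
   and transitivity makes all pure states equally long for GL_inner.  Together these show that a
   pure indecomposable effect e has riesz e proportional to a pure state on which e equals 1,
   and hence that every ideal effect f equals 1 on the state proportional to riesz f.  Pairing
   the marginals of the joint observable with these representers yields
     sum_(a,b) (f_a + g_b)(riesz m_ab) >= (2 - D_F - D_G) u(riesz u),
   and writing riesz m_ab as a nonnegative multiple of a state omega_ab, some omega_ab satisfies
   f_a(omega_ab) + g_b(omega_ab) >= 2 - D_F - D_G, which bounds LE(omega^F) + LE(omega^G). *)

lemma continuous_on_matrix_matrix_mult [continuous_intros]:
  fixes f g :: "'x::topological_space \<Rightarrow> real^'n^'n"
  assumes "continuous_on S f" "continuous_on S g"
  shows "continuous_on S (\<lambda>x. f x ** g x)"
  unfolding matrix_matrix_mult_def
  by (intro continuous_on_vec_lambda continuous_intros assms)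

lemma continuous_on_transpose [continuous_intros]:
  fixes f :: "'x::topological_space \<Rightarrow> real^'n^'n"
  assumes "continuous_on S f"
  shows "continuous_on S (\<lambda>x. transpose (f x))"
  unfolding transpose_def
  by (intro continuous_on_vec_lambda continuous_intros assms)

lemma continuous_on_matrix_vector_mult [continuous_intros]:
  fixes f :: "'x::topological_space \<Rightarrow> real^'n^'n"
  assumes "continuous_on S f"
  shows "continuous_on S (\<lambda>x. f x *v v)"
  unfolding matrix_vector_mult_def
  by (intro continuous_on_vec_lambda continuous_intros assms)

lemma matrix_add_rdistrib: "(B + C) ** A = B ** A + C ** A"
  for A :: "real^'p^'m" and B C :: "real^'m^'n"
  by (vector matrix_matrix_mult_def sum.distrib[symmetric] field_simps)

lemma bounded_linear_matrix_sandwich: "bounded_linear (\<lambda>X::real^'n^'n. A ** X ** B)"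
  unfolding linear_conv_bounded_linear[symmetric]
  by (intro linearI)
     (simp_all add: matrix_add_ldistrib matrix_add_rdistrib matrix_scalar_ac scalar_matrix_assoc)

lemma bounded_linear_bilinear_form: "bounded_linear (\<lambda>X::real^'n^'n. x \<bullet> (X *v y))"
  unfolding linear_conv_bounded_linear[symmetric]
  by (intro linearI)
     (simp_all add: matrix_vector_mult_add_rdistrib inner_add_right scaleR_matrix_vector_assoc[symmetric])

lemma inner_transpose_mult: "x \<bullet> ((transpose A ** A) *v y) = (A *v x) \<bullet> (A *v y)"
  for x y :: "real^'n"
  by (metis dot_lmul_matrix inner_commute matrix_vector_mul_assoc transpose_matrix_vector)

lemma matrix_inv_right: "invertible A \<Longrightarrow> A ** matrix_inv A = mat 1"
  unfolding matrix_inv_def invertible_def by (rule someI_ex[THEN conjunct1])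

lemma pos_def_imp_invertible:
  fixes A :: "real^'n^'n"
  assumes "\<And>x. x \<noteq> 0 \<Longrightarrow> x \<bullet> (A *v x) > 0"
  shows "invertible A"
proof -
  have "inj ((*v) A)"
  proof (rule injI)
    fix x y assume "A *v x = A *v y"
    then have "A *v (x - y) = 0" by (simp add: matrix_vector_mult_diff_distrib)
    then show "x = y" using assms[of "x - y"] by fastforce
  qed
  then show ?thesis using matrix_left_invertible_injective invertible_left_inverse by blast
qed

lemma bounded_continuous_image:
  fixes f :: "'a::heine_borel \<Rightarrow> 'b::metric_space"
  assumes "continuous_on UNIV f" "bounded S"
  shows "bounded (f ` S)"
proof -
  have "compact (f ` closure S)"
    by (intro compact_continuous_image continuous_on_subset[OF assms(1)])
       (simp_all add: compact_closure assms(2))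
  then show ?thesis by (rule bounded_closure_image[OF compact_imp_bounded])
qed

lemma norm_matrix_le_columns:
  "norm (A :: real^'n^'m) \<le> real CARD('m) * (\<Sum>j\<in>UNIV. norm (A *v axis j 1))"
proof -
  have "norm A \<le> (\<Sum>i\<in>UNIV. norm (A $ i))"
    unfolding norm_vec_def by (rule L2_set_le_sum) simp
  also have "\<dots> \<le> (\<Sum>i\<in>UNIV. \<Sum>j\<in>UNIV. \<bar>A $ i $ j\<bar>)"
    by (intro sum_mono norm_le_l1_cart)
  also have "\<dots> \<le> (\<Sum>i\<in>(UNIV::'m set). \<Sum>j\<in>UNIV. norm (A *v axis j 1))"
  proof (rule sum_mono, rule sum_mono)
    fix i j
    have "\<bar>A $ i $ j\<bar> = \<bar>(A *v axis j 1) $ i\<bar>"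
      by (simp add: matrix_vector_mult_basis column_def)
    then show "\<bar>A $ i $ j\<bar> \<le> norm (A *v axis j 1)"
      by (metis component_le_norm_cart)
  qed
  finally show ?thesis by simp
qed

lemma bounded_matrices_preserving:
  fixes \<Omega> :: "(real^'n) set"
  assumes "bounded \<Omega>" and "span \<Omega> = UNIV"
  shows "bounded {T :: real^'n^'n. (\<lambda>x. T *v x) ` \<Omega> \<subseteq> \<Omega>}"
proof -
  define P where "P = {T :: real^'n^'n. (\<lambda>x. T *v x) ` \<Omega> \<subseteq> \<Omega>}"
  obtain r where r: "\<And>w. w \<in> \<Omega> \<Longrightarrow> norm w \<le> r"
    using assms(1) bounded_iff by blast
  have "\<exists>C. \<forall>T\<in>P. norm (T *v x) \<le> C" for x
  proof -
    have "x \<in> span \<Omega>" using assms(2) by simp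
    then obtain t c where t: "finite t" "t \<subseteq> \<Omega>" and x: "x = (\<Sum>a\<in>t. c a *\<^sub>R a)"
      unfolding real_vector.span_explicit by blast
    have "norm (T *v x) \<le> (\<Sum>a\<in>t. \<bar>c a\<bar> * r)" if T: "T \<in> P" for T
    proof -
      have "T *v x = (\<Sum>a\<in>t. c a *\<^sub>R (T *v a))"
        unfolding x
        by (simp add: linear_sum[OF matrix_vector_mul_linear] linear_cmul[OF matrix_vector_mul_linear])
      then have "norm (T *v x) \<le> (\<Sum>a\<in>t. norm (c a *\<^sub>R (T *v a)))"
        by (simp only: norm_sum)
      also have "\<dots> \<le> (\<Sum>a\<in>t. \<bar>c a\<bar> * r)"
      proof (rule sum_mono)
        fix a assume "a \<in> t"
        then have "T *v a \<in> \<Omega>" using T t(2) by (auto simp: P_def)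
        then show "norm (c a *\<^sub>R (T *v a)) \<le> \<bar>c a\<bar> * r"
          using r by (simp add: mult_left_mono)
      qed
      finally show ?thesis .
    qed
    then show ?thesis by blast
  qed
  then have "\<exists>C. \<forall>j. \<forall>T\<in>P. norm (T *v axis j 1) \<le> C j"
    by (intro choice allI)
  then obtain C where C: "\<And>j T. T \<in> P \<Longrightarrow> norm (T *v axis j 1) \<le> C j"
    by blast
  have "norm T \<le> real CARD('n) * sum C UNIV" if "T \<in> P" for T
  proof -
    have "norm T \<le> real CARD('n) * (\<Sum>j\<in>UNIV. norm (T *v axis j 1))"
      by (rule norm_matrix_le_columns)
    also have "\<dots> \<le> real CARD('n) * sum C UNIV"
      by (intro mult_left_mono sum_mono C[OF that]) simp_all
    finally show ?thesis .
  qed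
  then show ?thesis unfolding bounded_iff P_def[symmetric] by blast
qed

section \<open>Invariant integration on a compact matrix group\<close>

locale haar_matrix_group = prob_space M for M :: "(real^'n^'n) measure" +
  fixes G :: "(real^'n^'n) set"
  assumes sets_M: "sets M = sets borel"
    and emeasure_G: "emeasure M G = 1"
    and left_invariant: "\<And>T. T \<in> G \<Longrightarrow> distr M borel (\<lambda>S. T ** S) = M"
    and bounded_G: "bounded G"
    and mult_closed: "\<And>S T. S \<in> G \<Longrightarrow> T \<in> G \<Longrightarrow> S ** T \<in> G"
    and inverse_closed: "\<And>T. T \<in> G \<Longrightarrow> \<exists>T'\<in>G. T' ** T = mat 1"
begin

lemma invertible_G: "T \<in> G \<Longrightarrow> invertible T"
  using inverse_closed invertible_left_inverse by blast

lemma G_events: "G \<in> events"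
  using emeasure_G emeasure_notin_sets by fastforce

lemma AE_G: "AE S in M. S \<in> G"
  using emeasure_G by (intro AE_prob_1) (simp add: measure_def)

lemma borel_measurable_continuous:
  "continuous_on UNIV f \<Longrightarrow> f \<in> borel_measurable M"
  using borel_measurable_continuous_onI measurable_cong_sets[OF sets_M refl] by blast

lemma integrable_continuous:
  fixes f :: "real^'n^'n \<Rightarrow> 'b::{banach, second_countable_topology}"
  assumes f: "continuous_on UNIV f"
  shows "integrable M f"
proof -
  obtain C where "\<forall>y\<in>f ` G. norm y \<le> C"
    using bounded_continuous_image[OF f bounded_G] bounded_iff by metis
  then have "AE T in M. norm (f T) \<le> C"
    using AE_G by (auto elim!: AE_mp)
  then show ?thesis
    by (intro integrable_const_bound borel_measurable_continuous f)
qed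

lemma integral_cong_G:
  fixes f g :: "real^'n^'n \<Rightarrow> 'b::{banach, second_countable_topology}"
  assumes "continuous_on UNIV f" "continuous_on UNIV g" "\<And>S. S \<in> G \<Longrightarrow> f S = g S"
  shows "(\<integral>S. f S \<partial>M) = (\<integral>S. g S \<partial>M)"
  using assms AE_G by (intro integral_cong_AE borel_measurable_continuous) (auto elim!: AE_mp)

lemma integral_const_on_G:
  fixes f :: "real^'n^'n \<Rightarrow> 'b::{banach, second_countable_topology}"
  assumes "f \<in> borel_measurable M" "\<And>S. S \<in> G \<Longrightarrow> f S = c"
  shows "(\<integral>S. f S \<partial>M) = c"
proof -
  have "(\<integral>S. f S \<partial>M) = (\<integral>S. c \<partial>M)"
    using assms AE_G by (intro integral_cong_AE) (auto elim!: AE_mp)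
  then show ?thesis by (simp add: prob_space)
qed

lemma integral_left_translate:
  fixes f :: "real^'n^'n \<Rightarrow> 'b::{banach, second_countable_topology}"
  assumes T: "T \<in> G" and f: "continuous_on UNIV f"
  shows "(\<integral>S. f (T ** S) \<partial>M) = (\<integral>S. f S \<partial>M)"
proof -
  have "(\<lambda>S. T ** S) \<in> borel_measurable M"
    by (intro borel_measurable_continuous continuous_intros)
  then have "(\<integral>S. f (T ** S) \<partial>M) = integral\<^sup>L (distr M borel (\<lambda>S. T ** S)) f"
    by (rule integral_distr[symmetric, OF _ borel_measurable_continuous_onI[OF f]])
  then show ?thesis using left_invariant[OF T] by simp
qed

lemma integral_inner_self_pos:
  assumes \<phi>: "continuous_on UNIV (\<phi> :: real^'n^'n \<Rightarrow> real^'n)"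
    and nonzero: "\<And>S. S \<in> G \<Longrightarrow> \<phi> S \<noteq> 0"
  shows "(\<integral>S. \<phi> S \<bullet> \<phi> S \<partial>M) > 0"
proof -
  have int: "integrable M (\<lambda>S. \<phi> S \<bullet> \<phi> S)"
    by (intro integrable_continuous continuous_intros \<phi>)
  have "\<not> (AE S in M. \<phi> S \<bullet> \<phi> S = 0)"
  proof
    assume "AE S in M. \<phi> S \<bullet> \<phi> S = 0"
    with AE_G have "AE S in M. False"
      by eventually_elim (use nonzero in auto)
    then show False by simp
  qed
  then have "(\<integral>S. \<phi> S \<bullet> \<phi> S \<partial>M) \<noteq> 0"
    using integral_nonneg_eq_0_iff_AE[OF int] by simp
  moreover have "(\<integral>S. \<phi> S \<bullet> \<phi> S \<partial>M) \<ge> 0" by (rule integral_nonneg_AE) simp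
  ultimately show ?thesis by linarith
qed

definition dual_gram :: "real^'n^'n" where
  "dual_gram = (\<integral>S. S ** transpose S \<partial>M)"

lemma dual_gram_invariant:
  assumes T: "T \<in> G"
  shows "T ** dual_gram ** transpose T = dual_gram"
proof -
  have int: "integrable M (\<lambda>S. S ** transpose S)"
    by (intro integrable_continuous continuous_intros)
  have "T ** dual_gram ** transpose T = (\<integral>S. T ** (S ** transpose S) ** transpose T \<partial>M)"
    unfolding dual_gram_def
    by (rule integral_bounded_linear[OF bounded_linear_matrix_sandwich int, symmetric])
  also have "\<dots> = (\<integral>S. (T ** S) ** transpose (T ** S) \<partial>M)"
    by (simp add: matrix_transpose_mul matrix_mul_assoc)
  also have "\<dots> = dual_gram"
    unfolding dual_gram_def by (intro integral_left_translate T continuous_intros)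
  finally show ?thesis .
qed

lemma invertible_dual_gram: "invertible dual_gram"
proof (rule pos_def_imp_invertible)
  fix x :: "real^'n" assume "x \<noteq> 0"
  have int: "integrable M (\<lambda>S. S ** transpose S)"
    by (intro integrable_continuous continuous_intros)
  have "x \<bullet> (dual_gram *v x) = (\<integral>S. x \<bullet> ((S ** transpose S) *v x) \<partial>M)"
    unfolding dual_gram_def
    by (rule integral_bounded_linear[OF bounded_linear_bilinear_form int, symmetric])
  also have "\<dots> = (\<integral>S. (transpose S *v x) \<bullet> (transpose S *v x) \<partial>M)"
    by (intro Bochner_Integration.integral_cong refl)
       (metis inner_transpose_mult transpose_transpose)
  also have "\<dots> > 0"
  proof (intro integral_inner_self_pos continuous_intros)
    fix S assume "S \<in> G"
    then have "inj ((*v) (transpose S))"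
      using invertible_G transpose_invertible inj_matrix_vector_mult by blast
    then show "transpose S *v x \<noteq> 0"
      using \<open>x \<noteq> 0\<close> by (metis injD matrix_vector_mult_0_right)
  qed
  finally show "x \<bullet> (dual_gram *v x) > 0" .
qed

text \<open>Since \<open>S ** dual_gram ** transpose S = dual_gram\<close> on \<open>G\<close>, the inverse of \<open>S \<in> G\<close>
  is given by a formula that, unlike \<open>matrix_inv\<close>, is continuous on all matrices.\<close>
definition group_inverse :: "real^'n^'n \<Rightarrow> real^'n^'n" where
  "group_inverse S = dual_gram ** transpose S ** matrix_inv dual_gram"

lemma continuous_on_group_inverse [continuous_intros]:
  "continuous_on X f \<Longrightarrow> continuous_on X (\<lambda>x. group_inverse (f x))"
  unfolding group_inverse_def by (intro continuous_intros)

lemma group_inverse_right: "S \<in> G \<Longrightarrow> S ** group_inverse S = mat 1"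
  unfolding group_inverse_def
  by (metis dual_gram_invariant invertible_dual_gram matrix_inv_right matrix_mul_assoc)

lemma group_inverse_left: "S \<in> G \<Longrightarrow> group_inverse S ** S = mat 1"
  using group_inverse_right matrix_left_right_inverse by blast

lemma group_inverse_unique: "S \<in> G \<Longrightarrow> S ** S' = mat 1 \<Longrightarrow> group_inverse S = S'"
  by (metis group_inverse_left matrix_mul_assoc matrix_mul_lid matrix_mul_rid)

lemma group_inverse_in_G: "S \<in> G \<Longrightarrow> group_inverse S \<in> G"
  by (metis inverse_closed group_inverse_unique matrix_left_right_inverse)

lemma group_inverse_involutive: "S \<in> G \<Longrightarrow> group_inverse (group_inverse S) = S"
  by (simp add: group_inverse_in_G group_inverse_left group_inverse_unique)

lemma group_inverse_mult:
  assumes "R \<in> G" "S \<in> G"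
  shows "group_inverse (R ** S) = group_inverse S ** group_inverse R"
proof (rule group_inverse_unique)
  show "R ** S \<in> G" using assms by (rule mult_closed)
  show "R ** S ** (group_inverse S ** group_inverse R) = mat 1"
    using assms by (metis group_inverse_right matrix_mul_assoc matrix_mul_rid)
qed

lemma borel_measurable_integral_continuous:
  fixes F :: "real^'n^'n \<Rightarrow> real^'n^'n \<Rightarrow> 'b::{banach, second_countable_topology}"
  assumes "continuous_on UNIV (case_prod F)"
  shows "(\<lambda>R. \<integral>S. F R S \<partial>M) \<in> borel_measurable M"
proof -
  have "sets (M \<Otimes>\<^sub>M M) = sets borel"
    using sets_pair_measure_cong[OF sets_M sets_M] borel_prod by metis
  then have "case_prod F \<in> borel_measurable (M \<Otimes>\<^sub>M M)"
    using borel_measurable_continuous_onI[OF assms] measurable_cong_sets by blast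
  then show ?thesis
    by (rule sigma_finite_measure.borel_measurable_lebesgue_integral[OF sigma_finite_measure])
qed

lemma integral_swap_continuous:
  fixes F :: "real^'n^'n \<Rightarrow> real^'n^'n \<Rightarrow> 'b::{banach, second_countable_topology}"
  assumes F: "continuous_on UNIV (case_prod F)"
  shows "(\<integral>S. (\<integral>R. F R S \<partial>M) \<partial>M) = (\<integral>R. (\<integral>S. F R S \<partial>M) \<partial>M)"
proof -
  interpret P: pair_prob_space M M
    by (simp add: pair_prob_space_def pair_sigma_finite_def prob_space_axioms
        prob_space_imp_sigma_finite)
  have "sets (M \<Otimes>\<^sub>M M) = sets borel"
    using sets_pair_measure_cong[OF sets_M sets_M] borel_prod by metis
  then have meas: "case_prod F \<in> borel_measurable (M \<Otimes>\<^sub>M M)"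
    using borel_measurable_continuous_onI[OF F] measurable_cong_sets by blast
  obtain C where C: "\<forall>y\<in>case_prod F ` (G \<times> G). norm y \<le> C"
    using bounded_continuous_image[OF F bounded_Times[OF bounded_G bounded_G]] bounded_iff by metis
  have "AE x in M \<Otimes>\<^sub>M M. x \<in> G \<times> G"
    using emeasure_pair_measure_Times[OF G_events G_events] emeasure_G
    by (intro P.AE_prob_1) (simp add: measure_def)
  then have "AE x in M \<Otimes>\<^sub>M M. norm (case_prod F x) \<le> C"
    using C by (auto elim!: AE_mp)
  then have "integrable (M \<Otimes>\<^sub>M M) (case_prod F)"
    by (intro P.integrable_const_bound meas)
  then show ?thesis by (rule P.Fubini_integral)
qed

text \<open>Unimodularity: integrate \<open>f (group_inverse R ** S)\<close> over \<open>R\<close> and \<open>S\<close> in both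
  orders; left invariance evaluates either inner integral.\<close>
lemma integral_group_inverse:
  fixes f :: "real^'n^'n \<Rightarrow> 'b::{banach, second_countable_topology}"
  assumes f: "continuous_on UNIV f"
  shows "(\<integral>S. f (group_inverse S) \<partial>M) = (\<integral>S. f S \<partial>M)"
proof -
  define F where "F R S = f (group_inverse R ** S)" for R S
  have F: "continuous_on UNIV (case_prod F)"
    unfolding F_def case_prod_unfold
    by (intro continuous_on_compose2[OF f] continuous_intros) auto
  have "(\<integral>R. (\<integral>S. F R S \<partial>M) \<partial>M) = (\<integral>S. f S \<partial>M)"
  proof (rule integral_const_on_G)
    show "(\<lambda>R. \<integral>S. F R S \<partial>M) \<in> borel_measurable M"
      by (rule borel_measurable_integral_continuous[OF F])
    show "(\<integral>S. F R S \<partial>M) = (\<integral>S. f S \<partial>M)" if "R \<in> G" for R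
      unfolding F_def by (intro integral_left_translate group_inverse_in_G that f)
  qed
  moreover have "(\<integral>S. (\<integral>R. F R S \<partial>M) \<partial>M) = (\<integral>S. f (group_inverse S) \<partial>M)"
  proof (rule integral_const_on_G)
    have "continuous_on UNIV (\<lambda>(S, R). F R S)"
      unfolding F_def case_prod_unfold
      by (intro continuous_on_compose2[OF f] continuous_intros) auto
    then show "(\<lambda>S. \<integral>R. F R S \<partial>M) \<in> borel_measurable M"
      using borel_measurable_integral_continuous[of "\<lambda>S R. F R S"] by simp
  next
    fix S assume S: "S \<in> G"
    have "(\<integral>R. F R S \<partial>M) = (\<integral>R. f (group_inverse (group_inverse S ** R)) \<partial>M)"
      unfolding F_def
    proof (rule integral_cong_G)
      show "continuous_on UNIV (\<lambda>R. f (group_inverse R ** S))"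
        "continuous_on UNIV (\<lambda>R. f (group_inverse (group_inverse S ** R)))"
        by (intro continuous_on_compose2[OF f] continuous_intros; simp)+
      show "f (group_inverse R ** S) = f (group_inverse (group_inverse S ** R))" if "R \<in> G" for R
        using that S by (simp add: group_inverse_mult group_inverse_in_G group_inverse_involutive)
    qed
    also have "\<dots> = (\<integral>R. f (group_inverse R) \<partial>M)"
      by (intro integral_left_translate group_inverse_in_G S continuous_on_compose2[OF f]
          continuous_intros) simp
    finally show "(\<integral>R. F R S \<partial>M) = (\<integral>S. f (group_inverse S) \<partial>M)" .
  qed
  ultimately show ?thesis using integral_swap_continuous[OF F] by simp
qed

lemma integral_right_translate:
  fixes f :: "real^'n^'n \<Rightarrow> 'b::{banach, second_countable_topology}"
  assumes T: "T \<in> G" and f: "continuous_on UNIV f"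
  shows "(\<integral>S. f (S ** T) \<partial>M) = (\<integral>S. f S \<partial>M)"
proof -
  have fi: "continuous_on UNIV (\<lambda>S. f (group_inverse S))"
    by (intro continuous_on_compose2[OF f] continuous_intros) simp
  have "(\<integral>S. f (S ** T) \<partial>M) = (\<integral>S. f (group_inverse (group_inverse T ** group_inverse S)) \<partial>M)"
  proof (rule integral_cong_G)
    show "continuous_on UNIV (\<lambda>S. f (S ** T))"
      "continuous_on UNIV (\<lambda>S. f (group_inverse (group_inverse T ** group_inverse S)))"
      by (intro continuous_on_compose2[OF f] continuous_intros; simp)+
    show "f (S ** T) = f (group_inverse (group_inverse T ** group_inverse S))" if "S \<in> G" for S
      using that T by (simp add: group_inverse_mult group_inverse_in_G group_inverse_involutive)
  qed
  also have "\<dots> = (\<integral>S. f (group_inverse (group_inverse T ** S)) \<partial>M)"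
    by (intro integral_group_inverse continuous_on_compose2[OF fi] continuous_intros) simp
  also have "\<dots> = (\<integral>S. f (group_inverse S) \<partial>M)"
    by (intro integral_left_translate group_inverse_in_G T fi)
  also have "\<dots> = (\<integral>S. f S \<partial>M)"
    by (rule integral_group_inverse[OF f])
  finally show ?thesis .
qed

lemma GL_inner_invariant: "T \<in> G \<Longrightarrow> GL_inner M (T *v x) (T *v y) = GL_inner M x y"
  unfolding GL_inner_def
  using integral_right_translate[of T "\<lambda>S. (S *v x) \<bullet> (S *v y)"]
  by (simp add: matrix_vector_mul_assoc continuous_intros)

definition gram :: "real^'n^'n" where
  "gram = (\<integral>S. transpose S ** S \<partial>M)"

lemma GL_inner_eq_gram: "GL_inner M x y = x \<bullet> (gram *v y)"
proof -
  have "integrable M (\<lambda>S. transpose S ** S)"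
    by (intro integrable_continuous continuous_intros)
  then have "x \<bullet> (gram *v y) = (\<integral>S. x \<bullet> ((transpose S ** S) *v y) \<partial>M)"
    unfolding gram_def by (rule integral_bounded_linear[OF bounded_linear_bilinear_form, symmetric])
  then show ?thesis
    unfolding GL_inner_def by (simp only: inner_transpose_mult)
qed

lemma GL_inner_commute: "GL_inner M x y = GL_inner M y x"
  unfolding GL_inner_def by (simp only: inner_commute)

sublocale GL_inner: bounded_bilinear "GL_inner M"
  unfolding GL_inner_eq_gram
  by (rule bounded_bilinear.comp[OF bounded_bilinear_inner bounded_linear_ident
        matrix_vector_mul_bounded_linear])

lemma GL_inner_pos: "x \<noteq> 0 \<Longrightarrow> GL_inner M x x > 0"
  unfolding GL_inner_def
  by (intro integral_inner_self_pos continuous_intros)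
     (metis invertible_G inj_matrix_vector_mult injD matrix_vector_mult_0_right)

lemma GL_inner_self_nonneg: "GL_inner M x x \<ge> 0"
  using GL_inner_pos[of x] by (cases "x = 0") (auto simp: GL_inner.zero_left)

definition riesz :: "real^'n \<Rightarrow> real^'n" where
  "riesz e = matrix_inv gram *v e"

lemma invertible_gram: "invertible gram"
  using GL_inner_pos by (intro pos_def_imp_invertible) (simp add: GL_inner_eq_gram)

lemma gram_riesz: "gram *v riesz e = e"
  unfolding riesz_def
  by (simp add: matrix_vector_mul_assoc matrix_inv_right[OF invertible_gram])

lemma riesz_gram: "riesz (gram *v x) = x"
proof -
  have "matrix_inv gram ** gram = mat 1"
    using matrix_inv_right[OF invertible_gram] matrix_left_right_inverse by blast
  then show ?thesis unfolding riesz_def by (simp add: matrix_vector_mul_assoc)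
qed

lemma GL_inner_riesz: "GL_inner M x (riesz e) = e \<bullet> x"
  by (simp add: GL_inner_eq_gram gram_riesz inner_commute)

lemma linear_riesz: "linear riesz"
  unfolding riesz_def by (rule matrix_vector_mul_linear)

lemma inner_riesz_commute: "a \<bullet> riesz b = b \<bullet> riesz a"
  by (metis GL_inner_commute GL_inner_riesz)

end

lemma GL_mult_closed:
  assumes "S \<in> GL \<Omega>" "T \<in> GL \<Omega>"
  shows "S ** T \<in> GL \<Omega>"
proof -
  have "(\<lambda>x. (S ** T) *v x) ` \<Omega> = (\<lambda>x. S *v x) ` ((\<lambda>x. T *v x) ` \<Omega>)"
    by (simp add: image_image matrix_vector_mul_assoc)
  then show ?thesis
    using assms invertible_mult unfolding GL_def by auto
qed

lemma GL_inverse_closed: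
  assumes T: "T \<in> GL \<Omega>"
  shows "\<exists>T'\<in>GL \<Omega>. T' ** T = mat 1"
proof -
  obtain T' where T': "T ** T' = mat 1" "T' ** T = mat 1"
    using T invertible_def unfolding GL_def by blast
  then have "invertible T'" using invertible_def by blast
  moreover have "(\<lambda>x. T' *v x) ` (\<lambda>x. T *v x) ` \<Omega> = \<Omega>"
    by (simp add: image_image matrix_vector_mul_assoc T')
  ultimately show ?thesis using T T' unfolding GL_def by auto
qed

lemma haar_matrix_group_GL:
  assumes "state_space \<Omega>" "haar_GL \<Omega> M"
  shows "haar_matrix_group M (GL \<Omega>)"
proof -
  have "prob_space M" using assms(2) by (intro prob_spaceI) (simp add: haar_GL_def)
  moreover have "GL \<Omega> \<subseteq> {T. (\<lambda>x. T *v x) ` \<Omega> \<subseteq> \<Omega>}" by (auto simp: GL_def)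
  then have "bounded (GL \<Omega>)"
    using assms(1) bounded_matrices_preserving bounded_subset compact_imp_bounded
    unfolding state_space_def by metis
  ultimately show ?thesis
    using assms(2) GL_mult_closed GL_inverse_closed
    unfolding haar_matrix_group_def haar_matrix_group_axioms_def haar_GL_def by auto
qed

section \<open>Observables and error measures\<close>

lemma abs_le_D_inf:
  assumes "bounded \<Omega>" "finite X" "a \<in> X" "w \<in> \<Omega>"
  shows "\<bar>ft a \<bullet> w - f a \<bullet> w\<bar> \<le> D_inf \<Omega> X ft f"
proof -
  obtain r where r: "\<And>w. w \<in> \<Omega> \<Longrightarrow> norm w \<le> r"
    using assms(1) bounded_iff by blast
  then have "0 \<le> r" using assms(4) norm_ge_zero order_trans by blast
  have "\<bar>ft x \<bullet> v - f x \<bullet> v\<bar> \<le> (\<Sum>x\<in>X. norm (ft x - f x) * r)" if "x \<in> X" "v \<in> \<Omega>" for x v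
  proof -
    have "\<bar>ft x \<bullet> v - f x \<bullet> v\<bar> \<le> norm (ft x - f x) * norm v"
      by (metis Cauchy_Schwarz_ineq2 inner_diff_left)
    also have "\<dots> \<le> norm (ft x - f x) * r"
      using r[OF that(2)] by (simp add: mult_left_mono)
    also have "\<dots> \<le> (\<Sum>x\<in>X. norm (ft x - f x) * r)"
      using that assms(2) \<open>0 \<le> r\<close> by (intro member_le_sum) auto
    finally show ?thesis .
  qed
  then have "bdd_above ((\<lambda>v. Max ((\<lambda>x. \<bar>ft x \<bullet> v - f x \<bullet> v\<bar>) ` X)) ` \<Omega>)"
    using assms(2,3) by (intro bdd_aboveI2) (subst Max_le_iff; auto)
  moreover have "\<bar>ft a \<bullet> w - f a \<bullet> w\<bar> \<le> Max ((\<lambda>x. \<bar>ft x \<bullet> w - f x \<bullet> w\<bar>) ` X)"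
    using assms(2,3) by (intro Max_ge) auto
  ultimately show ?thesis
    unfolding D_inf_def using assms(4) by (meson cSUP_upper order_trans)
qed

lemma LE_le: "finite X \<Longrightarrow> a \<in> X \<Longrightarrow> LE X f w \<le> 1 - f a \<bullet> w"
  unfolding LE_def by (simp add: Max_ge)

lemma observable_sum_subset_effect:
  assumes "unit_effect \<Omega> u" "observable \<Omega> u X m" "Y \<subseteq> X"
  shows "(\<Sum>y\<in>Y. m y) \<in> effects \<Omega>"
  unfolding effects_def
proof (intro CollectI ballI conjI)
  fix w assume w: "w \<in> \<Omega>"
  have m: "finite X" "\<And>x. x \<in> X \<Longrightarrow> 0 \<le> m x \<bullet> w" "(\<Sum>x\<in>X. m x) = u"
    using assms(2) w by (auto simp: observable_def effects_def)
  then show "0 \<le> (\<Sum>y\<in>Y. m y) \<bullet> w"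
    using assms(3) by (auto simp: inner_sum_left intro: sum_nonneg)
  have "(\<Sum>y\<in>Y. m y \<bullet> w) \<le> (\<Sum>x\<in>X. m x \<bullet> w)"
    using m assms(3) by (intro sum_mono2) auto
  also have "\<dots> = 1"
    using m(3) assms(1) w by (simp add: unit_effect_def inner_sum_left[symmetric])
  finally show "(\<Sum>y\<in>Y. m y) \<bullet> w \<le> 1" by (simp add: inner_sum_left)
qed

lemma observable_marginal_effects:
  assumes "unit_effect \<Omega> u" "observable \<Omega> u (A \<times> B) m"
  shows "a \<in> A \<Longrightarrow> (\<Sum>b\<in>B. m (a, b)) \<in> effects \<Omega>"
    and "b \<in> B \<Longrightarrow> (\<Sum>a\<in>A. m (a, b)) \<in> effects \<Omega>"
proof -
  show "(\<Sum>b\<in>B. m (a, b)) \<in> effects \<Omega>" if "a \<in> A"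
  proof -
    have "{a} \<times> B = (\<lambda>b. (a, b)) ` B" by auto
    then show ?thesis
      using observable_sum_subset_effect[OF assms, of "{a} \<times> B"] that
      by (auto simp: sum.reindex inj_on_def)
  qed
  show "(\<Sum>a\<in>A. m (a, b)) \<in> effects \<Omega>" if "b \<in> B"
  proof -
    have "A \<times> {b} = (\<lambda>a. (a, b)) ` A" by auto
    then show ?thesis
      using observable_sum_subset_effect[OF assms, of "A \<times> {b}"] that
      by (auto simp: sum.reindex inj_on_def)
  qed
qed

lemma exists_ge_weighted_average:
  fixes t v :: "'x \<Rightarrow> real"
  assumes "finite I" "\<And>x. x \<in> I \<Longrightarrow> t x \<ge> 0" "sum t I > 0"
    and "c * sum t I \<le> (\<Sum>x\<in>I. t x * v x)"
  shows "\<exists>x\<in>I. c \<le> v x"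
proof (rule ccontr)
  assume "\<not> ?thesis"
  then have less: "\<And>x. x \<in> I \<Longrightarrow> v x < c" by auto
  obtain x where x: "x \<in> I" "t x \<noteq> 0"
    using assms(3) sum.neutral[of I t] by (metis less_irrefl)
  have "(\<Sum>x\<in>I. t x * v x) < (\<Sum>x\<in>I. t x * c)"
  proof (rule sum_strict_mono_ex1[OF assms(1)])
    show "\<forall>x\<in>I. t x * v x \<le> t x * c"
      using assms(2) less by (simp add: mult_left_mono less_imp_le)
    show "\<exists>x\<in>I. t x * v x < t x * c"
      using x assms(2)[of x] less[of x] by (intro bexI[of _ x]) auto
  qed
  then show False using assms(4) by (simp add: sum_distrib_left mult.commute)
qed

lemma sum_marginals_inner_linear:
  assumes "linear h"
  shows "(\<Sum>a\<in>A. f a \<bullet> h (\<Sum>b\<in>B. m (a, b))) + (\<Sum>b\<in>B. g b \<bullet> h (\<Sum>a\<in>A. m (a, b)))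
    = (\<Sum>x\<in>A \<times> B. (f (fst x) + g (snd x)) \<bullet> h (m x))"
proof -
  have "(\<Sum>b\<in>B. g b \<bullet> h (\<Sum>a\<in>A. m (a, b))) = (\<Sum>b\<in>B. \<Sum>a\<in>A. g b \<bullet> h (m (a, b)))"
    by (simp add: linear_sum[OF assms] inner_sum_right)
  also have "\<dots> = (\<Sum>x\<in>A \<times> B. g (snd x) \<bullet> h (m x))"
    by (subst sum.swap) (simp add: sum.cartesian_product case_prod_unfold)
  moreover have "(\<Sum>a\<in>A. f a \<bullet> h (\<Sum>b\<in>B. m (a, b))) = (\<Sum>x\<in>A \<times> B. f (fst x) \<bullet> h (m x))"
    by (simp add: linear_sum[OF assms] inner_sum_right sum.cartesian_product case_prod_unfold)
  ultimately show ?thesis by (simp add: inner_add_left sum.distrib)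
qed

lemma sum_list_effects_nonneg:
  "(\<forall>e\<in>set es. e \<in> effects \<Omega>) \<Longrightarrow> w \<in> \<Omega> \<Longrightarrow> 0 \<le> sum_list es \<bullet> w"
  by (induction es) (auto simp: inner_add_left effects_def)

section \<open>Transitive self-dual state spaces\<close>

locale transitive_self_dual_gpt =
  fixes \<Omega> :: "(real^'n) set" and u :: "real^'n" and M :: "(real^'n^'n) measure"
  assumes state_space: "state_space \<Omega>" and unit_effect: "unit_effect \<Omega> u"
    and transitive: "transitive_ss \<Omega>" and haar: "haar_GL \<Omega> M"
    and self_dual: "self_dual_wrt \<Omega> (GL_inner M)"
begin

sublocale haar_matrix_group M "GL \<Omega>"
  by (rule haar_matrix_group_GL[OF state_space haar])

lemma unit_effect_state: "w \<in> \<Omega> \<Longrightarrow> u \<bullet> w = 1"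
  using unit_effect by (simp add: unit_effect_def)

lemma bounded_states: "bounded \<Omega>"
  using state_space by (simp add: state_space_def compact_imp_bounded)

lemma states_eq_hull_extreme: "\<Omega> = convex hull {w. w extreme_point_of \<Omega>}"
  using state_space by (intro Krein_Milman_Minkowski) (auto simp: state_space_def)

lemma scaled_state_in_cone: "0 \<le> c \<Longrightarrow> w \<in> \<Omega> \<Longrightarrow> c *\<^sub>R w \<in> pos_cone \<Omega>"
  unfolding pos_cone_def by blast

lemma state_in_cone: "w \<in> \<Omega> \<Longrightarrow> w \<in> pos_cone \<Omega>"
  using scaled_state_in_cone[of 1] by simp

lemma GL_inner_cone_nonneg: "x \<in> pos_cone \<Omega> \<Longrightarrow> y \<in> pos_cone \<Omega> \<Longrightarrow> 0 \<le> GL_inner M x y"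
  using self_dual unfolding self_dual_wrt_def by blast

lemma riesz_effect_in_cone:
  assumes "e \<in> effects \<Omega>"
  shows "riesz e \<in> pos_cone \<Omega>"
proof -
  have "0 \<le> GL_inner M x (riesz e)" if "x \<in> pos_cone \<Omega>" for x
    using that assms by (auto simp: pos_cone_def effects_def GL_inner_riesz)
  then show ?thesis
    using self_dual unfolding self_dual_wrt_def by blast
qed

lemma GL_inner_extreme_eq:
  assumes "v extreme_point_of \<Omega>" "w extreme_point_of \<Omega>"
  shows "GL_inner M v v = GL_inner M w w"
proof -
  obtain T where "T \<in> GL \<Omega>" "T *v v = w"
    using transitive assms unfolding transitive_ss_def by blast
  then show ?thesis using GL_inner_invariant by metis
qed

lemma GL_inner_extreme_le:
  assumes w: "w extreme_point_of \<Omega>" and x: "x \<in> \<Omega>"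
  shows "GL_inner M w x \<le> GL_inner M w w"
proof -
  have "GL_inner M w v \<le> GL_inner M w w" if v: "v extreme_point_of \<Omega>" for v
  proof -
    have "0 \<le> GL_inner M (w - v) (w - v)" by (rule GL_inner_self_nonneg)
    also have "\<dots> = GL_inner M w w + GL_inner M v v - 2 * GL_inner M w v"
      by (simp add: GL_inner.diff_left GL_inner.diff_right GL_inner_commute[of v w])
    finally show ?thesis using GL_inner_extreme_eq[OF v w] by simp
  qed
  moreover have "GL_inner M w y = (gram *v w) \<bullet> y" for y
    by (metis GL_inner_commute GL_inner_eq_gram inner_commute)
  then have "convex {x. GL_inner M w x \<le> GL_inner M w w}"
    by (simp only:) (rule convex_halfspace_le)
  ultimately have "convex hull {v. v extreme_point_of \<Omega>} \<subseteq> {x. GL_inner M w x \<le> GL_inner M w w}"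
    by (intro hull_minimal) auto
  then show ?thesis using x states_eq_hull_extreme by auto
qed

lemma scaled_states_eq:
  assumes "a \<in> \<Omega>" "b \<in> \<Omega>" "s *\<^sub>R a = r *\<^sub>R b" "s \<noteq> 0"
  shows "a = b"
proof -
  have "s = r"
    using arg_cong[OF assms(3), of "(\<bullet>) u"] unit_effect_state assms(1,2) by simp
  then show ?thesis using assms(3,4) by simp
qed

lemma gram_cone_summand_effect:
  assumes e: "e \<in> effects \<Omega>" and pq: "riesz e = p + q" "p \<in> pos_cone \<Omega>" "q \<in> pos_cone \<Omega>"
  shows "gram *v p \<in> effects \<Omega>"
  unfolding effects_def
proof (intro CollectI ballI conjI)
  fix x assume x: "x \<in> \<Omega>"
  have eval: "(gram *v p) \<bullet> x = GL_inner M x p"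
    by (simp add: GL_inner_eq_gram inner_commute)
  show "0 \<le> (gram *v p) \<bullet> x"
    unfolding eval by (rule GL_inner_cone_nonneg[OF state_in_cone[OF x] pq(2)])
  have "e \<bullet> x = GL_inner M x p + GL_inner M x q"
    by (metis GL_inner_riesz GL_inner.add_right pq(1))
  moreover have "0 \<le> GL_inner M x q" "e \<bullet> x \<le> 1"
    using x pq e by (auto intro: GL_inner_cone_nonneg state_in_cone simp: effects_def)
  ultimately show "(gram *v p) \<bullet> x \<le> 1" unfolding eval by linarith
qed

lemma indecomposable_riesz_summand:
  assumes e: "e \<in> effects \<Omega>" "indecomposable \<Omega> e"
    and pq: "riesz e = p + q" "p \<in> pos_cone \<Omega>" "q \<in> pos_cone \<Omega>"
  shows "\<exists>c. p = c *\<^sub>R riesz e"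
proof -
  have "gram *v p \<in> effects \<Omega>" "gram *v q \<in> effects \<Omega>"
    using gram_cone_summand_effect[OF e(1)] pq by (auto simp: add.commute)
  moreover have "e = gram *v p + gram *v q"
    by (metis gram_riesz matrix_vector_right_distrib pq(1))
  ultimately obtain c where "gram *v p = c *\<^sub>R e"
    using e(2) unfolding indecomposable_def by blast
  then have "p = riesz (c *\<^sub>R e)" by (metis riesz_gram)
  then show ?thesis using linear_scale[OF linear_riesz] by metis
qed

lemma riesz_indecomposable_extreme:
  assumes e: "e \<in> effects \<Omega>" "indecomposable \<Omega> e"
  obtains l \<sigma> where "l > 0" "\<sigma> extreme_point_of \<Omega>" "riesz e = l *\<^sub>R \<sigma>"
proof -
  obtain l \<sigma> where l: "l \<ge> 0" and \<sigma>: "\<sigma> \<in> \<Omega>" and e_eq: "riesz e = l *\<^sub>R \<sigma>"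
    using riesz_effect_in_cone[OF e(1)] unfolding pos_cone_def by blast
  have "l \<noteq> 0"
    using e(2) e_eq gram_riesz[of e] by (auto simp: indecomposable_def)
  with l have "l > 0" by simp
  have "\<sigma> \<notin> open_segment a b" if a: "a \<in> \<Omega>" and b: "b \<in> \<Omega>" for a b
  proof
    assume "\<sigma> \<in> open_segment a b"
    then obtain t where "a \<noteq> b" "0 < t" "t < 1" and \<sigma>_eq: "\<sigma> = (1 - t) *\<^sub>R a + t *\<^sub>R b"
      unfolding in_segment by blast
    define p q where "p = (l * (1 - t)) *\<^sub>R a" and "q = (l * t) *\<^sub>R b"
    have pq: "riesz e = p + q" "p \<in> pos_cone \<Omega>" "q \<in> pos_cone \<Omega>"
      using \<open>l > 0\<close> \<open>t < 1\<close> \<open>0 < t\<close> a b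
      by (auto simp: p_def q_def e_eq \<sigma>_eq scaleR_add_right intro!: scaled_state_in_cone)
    obtain c d where "p = c *\<^sub>R riesz e" "q = d *\<^sub>R riesz e"
      using indecomposable_riesz_summand[OF e] pq by (metis add.commute)
    then have "(l * (1 - t)) *\<^sub>R a = (c * l) *\<^sub>R \<sigma>" "(l * t) *\<^sub>R b = (d * l) *\<^sub>R \<sigma>"
      by (simp_all add: p_def q_def e_eq)
    then have "a = \<sigma>" "b = \<sigma>"
      using scaled_states_eq a b \<sigma> \<open>l > 0\<close> \<open>0 < t\<close> \<open>t < 1\<close> by auto
    with \<open>a \<noteq> b\<close> show False by simp
  qed
  then have "\<sigma> extreme_point_of \<Omega>"
    using \<sigma> by (simp add: extreme_point_of_def)
  with \<open>l > 0\<close> e_eq show ?thesis using that by blast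
qed

text \<open>Purity rules out \<open>e \<bullet> \<sigma> < 1\<close>: otherwise \<open>e\<close> would be a proper multiple of the effect
  \<open>x \<mapsto> GL_inner M \<sigma> x / GL_inner M \<sigma> \<sigma>\<close>, which is an effect by \<open>GL_inner_extreme_le\<close>.\<close>
lemma riesz_pure_indecomposable:
  assumes e: "e \<in> effects \<Omega>" "pure_effect \<Omega> e" "indecomposable \<Omega> e"
  obtains l \<sigma> where "l \<ge> 0" "\<sigma> \<in> \<Omega>" "riesz e = l *\<^sub>R \<sigma>" "e \<bullet> \<sigma> = 1"
proof -
  obtain l \<sigma> where "l > 0" and \<sigma>: "\<sigma> extreme_point_of \<Omega>" and e_eq: "riesz e = l *\<^sub>R \<sigma>"
    using riesz_indecomposable_extreme[OF e(1,3)] by blast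
  have \<sigma>_in: "\<sigma> \<in> \<Omega>" using \<sigma> by (simp add: extreme_point_of_def)
  define \<rho> where "\<rho> = GL_inner M \<sigma> \<sigma>"
  have "\<rho> > 0"
    unfolding \<rho>_def using unit_effect_state[OF \<sigma>_in] by (intro GL_inner_pos) auto
  have eval: "e \<bullet> x = l * GL_inner M \<sigma> x" for x
  proof -
    have "e \<bullet> x = GL_inner M x (riesz e)" by (rule GL_inner_riesz[symmetric])
    then show ?thesis by (simp add: e_eq GL_inner.scaleR_right GL_inner_commute[of x \<sigma>])
  qed
  have "l * \<rho> = 1"
  proof (rule ccontr)
    assume "l * \<rho> \<noteq> 1"
    moreover have "l * \<rho> \<le> 1"
      using e(1) \<sigma>_in eval[of \<sigma>] by (auto simp: effects_def \<rho>_def)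
    ultimately have "l * \<rho> < 1" by simp
    define e' where "e' = (1 / (l * \<rho>)) *\<^sub>R e"
    have "e' \<in> effects \<Omega>"
      unfolding effects_def
    proof (intro CollectI ballI conjI)
      fix x assume x: "x \<in> \<Omega>"
      have "e' \<bullet> x = GL_inner M \<sigma> x / \<rho>"
        using \<open>l > 0\<close> by (simp add: e'_def eval)
      then show "0 \<le> e' \<bullet> x" "e' \<bullet> x \<le> 1"
        using GL_inner_cone_nonneg[OF state_in_cone[OF \<sigma>_in] state_in_cone[OF x]]
          GL_inner_extreme_le[OF \<sigma> x] \<open>\<rho> > 0\<close> by (simp_all add: \<rho>_def)
    qed
    moreover have "0 \<in> effects \<Omega>" by (simp add: effects_def)
    moreover have "e = (1 - l * \<rho>) *\<^sub>R 0 + (l * \<rho>) *\<^sub>R e'" "0 \<noteq> e'"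
      using \<open>l > 0\<close> \<open>\<rho> > 0\<close> e(3) by (auto simp: e'_def indecomposable_def)
    then have "e \<in> open_segment 0 e'"
      using \<open>l > 0\<close> \<open>\<rho> > 0\<close> \<open>l * \<rho> < 1\<close> unfolding in_segment by auto
    ultimately show False
      using e(2) unfolding pure_effect_def extreme_point_of_def by blast
  qed
  then have "e \<bullet> \<sigma> = 1" by (simp add: eval \<rho>_def)
  with \<open>l > 0\<close> \<sigma>_in e_eq show ?thesis using that[of l \<sigma>] by simp
qed

lemma inner_unit_riesz_pos: "u \<bullet> riesz u > 0"
proof -
  have "u \<noteq> 0"
    using unit_effect_state state_space by (fastforce simp: state_space_def)
  then have "riesz u \<noteq> 0" using gram_riesz[of u] by auto
  then show ?thesis using GL_inner_pos GL_inner_riesz by metis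
qed

text \<open>Writing \<open>riesz e = s *\<^sub>R \<sigma>\<close> with \<open>\<sigma> \<in> \<Omega>\<close>, this says \<open>e \<bullet> \<sigma> = 1\<close> unless \<open>s = 0\<close>.\<close>
definition riesz_sharp :: "real^'n \<Rightarrow> bool" where
  "riesz_sharp e \<longleftrightarrow> e \<bullet> riesz e = u \<bullet> riesz e"

lemma riesz_sharp_sum_list:
  assumes "\<forall>e\<in>set es. e \<in> effects \<Omega> \<and> pure_effect \<Omega> e \<and> indecomposable \<Omega> e"
    and "sum_list es \<in> effects \<Omega>"
  shows "riesz_sharp (sum_list es)"
  using assms
proof (induction es)
  case Nil
  then show ?case by (simp add: riesz_sharp_def linear_0[OF linear_riesz])
next
  case (Cons e es)
  let ?g = "sum_list es"
  have e: "e \<in> effects \<Omega>" "pure_effect \<Omega> e" "indecomposable \<Omega> e"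
    using Cons.prems(1) by auto
  have "?g \<in> effects \<Omega>"
    unfolding effects_def
  proof (intro CollectI ballI conjI)
    fix x assume x: "x \<in> \<Omega>"
    show "0 \<le> ?g \<bullet> x"
      using Cons.prems(1) x by (intro sum_list_effects_nonneg) auto
    have "(e + ?g) \<bullet> x \<le> 1" "0 \<le> e \<bullet> x"
      using Cons.prems(2) e(1) x by (auto simp: effects_def)
    then show "?g \<bullet> x \<le> 1" by (simp add: inner_add_left)
  qed
  then have IH: "?g \<bullet> riesz ?g = u \<bullet> riesz ?g"
    using Cons by (simp add: riesz_sharp_def)
  obtain l \<sigma> where \<sigma>: "\<sigma> \<in> \<Omega>" and e_eq: "riesz e = l *\<^sub>R \<sigma>" and e\<sigma>: "e \<bullet> \<sigma> = 1"
    using riesz_pure_indecomposable[OF e] by blast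
  have "(e + ?g) \<bullet> \<sigma> \<le> 1" "0 \<le> ?g \<bullet> \<sigma>"
    using Cons.prems(2) \<open>?g \<in> effects \<Omega>\<close> \<sigma> by (auto simp: effects_def)
  then have "?g \<bullet> \<sigma> = 0" using e\<sigma> by (simp add: inner_add_left)
  then have "e \<bullet> riesz ?g = 0"
    by (simp add: inner_riesz_commute[of e] e_eq)
  moreover have "e \<bullet> riesz e = u \<bullet> riesz e"
    using e\<sigma> unit_effect_state[OF \<sigma>] by (simp add: e_eq)
  ultimately show ?case
    using IH inner_riesz_commute[of ?g e]
    by (simp add: riesz_sharp_def linear_add[OF linear_riesz] inner_add_left inner_add_right)
qed

lemma riesz_sharp_complement:
  assumes "riesz_sharp g"
  shows "riesz_sharp (u - g)"
  using assms inner_riesz_commute[of g u]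
  by (simp add: riesz_sharp_def linear_diff[OF linear_riesz] inner_diff_left inner_diff_right)

lemma ideal_observable_riesz_sharp:
  assumes "ideal_observable \<Omega> u X f" "a \<in> X"
  shows "riesz_sharp (f a)"
proof -
  have fa: "f a \<in> effects \<Omega>"
    using assms by (simp add: ideal_observable_def observable_def)
  obtain es where es: "\<forall>e\<in>set es. e \<in> effects \<Omega> \<and> pure_effect \<Omega> e \<and> indecomposable \<Omega> e"
    and "f a = sum_list es \<or> f a = u - sum_list es"
    using assms unfolding ideal_observable_def by blast
  then consider "f a = sum_list es" | "f a = u - sum_list es" by blast
  then show ?thesis
  proof cases
    case 1
    then show ?thesis using riesz_sharp_sum_list[OF es] fa by simp
  next
    case 2
    have "sum_list es \<in> effects \<Omega>"
      using fa unit_effect_state by (auto simp: effects_def 2 inner_diff_left)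
    then show ?thesis
      using riesz_sharp_complement[OF riesz_sharp_sum_list[OF es]] 2 by simp
  qed
qed

text \<open>Since \<open>riesz (f a)\<close> is a multiple of a state on which \<open>f a\<close> equals 1,
  \<open>f a \<bullet> riesz (mf a) = mf a \<bullet> riesz (f a) \<ge> (1 - \<epsilon>) * (u \<bullet> riesz (f a))\<close>.\<close>
lemma ideal_observable_approx:
  assumes f: "ideal_observable \<Omega> u X f"
    and mf: "\<And>a. a \<in> X \<Longrightarrow> mf a \<in> effects \<Omega>"
    and \<epsilon>: "\<And>a w. a \<in> X \<Longrightarrow> w \<in> \<Omega> \<Longrightarrow> f a \<bullet> w - mf a \<bullet> w \<le> \<epsilon>"
  shows "(1 - \<epsilon>) * (u \<bullet> riesz u) \<le> (\<Sum>a\<in>X. f a \<bullet> riesz (mf a))"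
proof -
  have "(1 - \<epsilon>) * (u \<bullet> riesz (f a)) \<le> f a \<bullet> riesz (mf a)" if a: "a \<in> X" for a
  proof -
    have "f a \<in> effects \<Omega>"
      using f a by (simp add: ideal_observable_def observable_def)
    then obtain s \<sigma> where s: "0 \<le> s" and \<sigma>: "\<sigma> \<in> \<Omega>" and fa_eq: "riesz (f a) = s *\<^sub>R \<sigma>"
      using riesz_effect_in_cone unfolding pos_cone_def by blast
    have uf: "u \<bullet> riesz (f a) = s"
      by (simp add: fa_eq unit_effect_state[OF \<sigma>])
    moreover have fmf: "f a \<bullet> riesz (mf a) = s * (mf a \<bullet> \<sigma>)"
      by (simp add: inner_riesz_commute[of "f a"] fa_eq)
    moreover have "s * (f a \<bullet> \<sigma>) = s"
      using ideal_observable_riesz_sharp[OF f a] unit_effect_state[OF \<sigma>]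
      by (simp add: riesz_sharp_def fa_eq)
    moreover have "s * (f a \<bullet> \<sigma>) - s * \<epsilon> \<le> s * (mf a \<bullet> \<sigma>)"
      using \<epsilon>[OF a \<sigma>] s by (simp add: right_diff_distrib[symmetric] mult_left_mono)
    moreover have "(1 - \<epsilon>) * s = s - s * \<epsilon>"
      by (simp add: algebra_simps)
    ultimately show ?thesis unfolding uf fmf by linarith
  qed
  then have "(\<Sum>a\<in>X. (1 - \<epsilon>) * (u \<bullet> riesz (f a))) \<le> (\<Sum>a\<in>X. f a \<bullet> riesz (mf a))"
    by (rule sum_mono)
  moreover have "(\<Sum>a\<in>X. f a) = u"
    using f by (simp add: ideal_observable_def observable_def)
  ultimately show ?thesis
    by (simp add: sum_distrib_left[symmetric] inner_sum_right[symmetric]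
        linear_sum[OF linear_riesz, symmetric])
qed

lemma exists_state_joint_ge:
  assumes m: "observable \<Omega> u (A \<times> B) m"
    and c: "c * (u \<bullet> riesz u)
      \<le> (\<Sum>a\<in>A. f a \<bullet> riesz (\<Sum>b\<in>B. m (a, b))) + (\<Sum>b\<in>B. g b \<bullet> riesz (\<Sum>a\<in>A. m (a, b)))"
  shows "\<exists>w\<in>\<Omega>. \<exists>a\<in>A. \<exists>b\<in>B. c \<le> f a \<bullet> w + g b \<bullet> w"
proof -
  have "\<forall>x\<in>A \<times> B. \<exists>t w. 0 \<le> t \<and> w \<in> \<Omega> \<and> riesz (m x) = t *\<^sub>R w"
    using m riesz_effect_in_cone unfolding observable_def pos_cone_def by blast
  then obtain t w where tw: "\<And>x. x \<in> A \<times> B \<Longrightarrow> 0 \<le> t x \<and> w x \<in> \<Omega> \<and> riesz (m x) = t x *\<^sub>R w x"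
    by metis
  define v where "v x = f (fst x) \<bullet> w x + g (snd x) \<bullet> w x" for x
  have "finite (A \<times> B)" "(\<Sum>x\<in>A \<times> B. m x) = u"
    using m by (simp_all add: observable_def)
  have u_sum: "u \<bullet> riesz u = (\<Sum>x\<in>A \<times> B. t x)"
  proof -
    from \<open>(\<Sum>x\<in>A \<times> B. m x) = u\<close> have "u \<bullet> riesz u = (\<Sum>x\<in>A \<times> B. u \<bullet> riesz (m x))"
      by (metis linear_sum[OF linear_riesz] inner_sum_right)
    also have "\<dots> = (\<Sum>x\<in>A \<times> B. t x)"
      using tw unit_effect_state by (intro sum.cong) auto
    finally show ?thesis .
  qed
  have "(\<Sum>a\<in>A. f a \<bullet> riesz (\<Sum>b\<in>B. m (a, b))) + (\<Sum>b\<in>B. g b \<bullet> riesz (\<Sum>a\<in>A. m (a, b)))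
      = (\<Sum>x\<in>A \<times> B. (f (fst x) + g (snd x)) \<bullet> riesz (m x))"
    by (rule sum_marginals_inner_linear[OF linear_riesz])
  also have "\<dots> = (\<Sum>x\<in>A \<times> B. t x * v x)"
    using tw by (intro sum.cong) (auto simp: v_def inner_add_left algebra_simps)
  finally have "c * (\<Sum>x\<in>A \<times> B. t x) \<le> (\<Sum>x\<in>A \<times> B. t x * v x)"
    using c u_sum by simp
  moreover note inner_unit_riesz_pos
  ultimately obtain x where x: "x \<in> A \<times> B" "c \<le> v x"
    using exists_ge_weighted_average[of "A \<times> B" t c v] \<open>finite (A \<times> B)\<close> tw u_sum by auto
  then show ?thesis
    using tw[OF x(1)] unfolding v_def mem_Times_iff by blast
qed

end

theorem theorem3p2:
  fixes \<Omega> :: "(real^'n) set" and u :: "real^'n" and M :: "(real^'n^'n) measure"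
    and A :: "'a set" and B :: "'b set"
    and f :: "'a \<Rightarrow> real^'n" and g :: "'b \<Rightarrow> real^'n"
    and m :: "'a \<times> 'b \<Rightarrow> real^'n"
  assumes "state_space \<Omega>" and "unit_effect \<Omega> u"
    and "transitive_ss \<Omega>"
    and "haar_GL \<Omega> M" and "self_dual_wrt \<Omega> (GL_inner M)"
    and "ideal_observable \<Omega> u A f" and "ideal_observable \<Omega> u B g"
    and "observable \<Omega> u (A \<times> B) m"
  shows "\<exists>w\<in>\<Omega>. D_inf \<Omega> A (\<lambda>a. \<Sum>b\<in>B. m (a, b)) f + D_inf \<Omega> B (\<lambda>b. \<Sum>a\<in>A. m (a, b)) g
                \<ge> LE A f w + LE B g w"
proof -
  interpret transitive_self_dual_gpt \<Omega> u M
    using assms(1-5) by unfold_locales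
  define dF where "dF = D_inf \<Omega> A (\<lambda>a. \<Sum>b\<in>B. m (a, b)) f"
  define dG where "dG = D_inf \<Omega> B (\<lambda>b. \<Sum>a\<in>A. m (a, b)) g"
  have fin: "finite A" "finite B"
    using assms(6,7) by (simp_all add: ideal_observable_def observable_def)
  have "(1 - dF) * (u \<bullet> riesz u) \<le> (\<Sum>a\<in>A. f a \<bullet> riesz (\<Sum>b\<in>B. m (a, b)))"
    using abs_le_D_inf[OF bounded_states fin(1)]
    by (intro ideal_observable_approx assms(6) observable_marginal_effects[OF unit_effect assms(8)])
       (fastforce simp: dF_def abs_le_iff)+
  moreover have "(1 - dG) * (u \<bullet> riesz u) \<le> (\<Sum>b\<in>B. g b \<bullet> riesz (\<Sum>a\<in>A. m (a, b)))"
    using abs_le_D_inf[OF bounded_states fin(2)]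
    by (intro ideal_observable_approx assms(7) observable_marginal_effects[OF unit_effect assms(8)])
       (fastforce simp: dG_def abs_le_iff)+
  ultimately obtain w a b where "w \<in> \<Omega>" "a \<in> A" "b \<in> B" "2 - dF - dG \<le> f a \<bullet> w + g b \<bullet> w"
    using exists_state_joint_ge[OF assms(8), of "2 - dF - dG" f g]
    by (auto simp: algebra_simps)
  moreover have "LE A f w + LE B g w \<le> 2 - f a \<bullet> w - g b \<bullet> w"
    using LE_le[OF fin(1) \<open>a \<in> A\<close>, of f w] LE_le[OF fin(2) \<open>b \<in> B\<close>, of g w] by simp
  ultimately show ?thesis
    unfolding dF_def[symmetric] dG_def[symmetric] by (intro bexI[of _ w]) auto
qed

end
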